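(* Let $Z_0,Z_1$ be i.i.d. ${\mathsf N}(0,1)$, independent of $(W,U)\sim\mu_{W,U}$, and let $h:\mathbb{R}^2\to\mathbb{R}$ be continuous. For any fixed $\omega_0> 0$, the function $$a\mapsto\frac1{a^2}\mathbb{E}\big[\mathbb{E}[Z_0\mid h(aZ_0+(\omega_0^2-a^2)^{1/2}Z_1,W),U,Z_1]^2\big]$$ is non-increasing in $a\in(0,\omega_0]$.
   Context: $\mu_{W,U}$ is a probability distribution on $\mathbb{R}^2$. *)

theory Defs
  imports "HOL-Probability.Probability"
begin

definition cond_sigma ::
  "'a measure \<Rightarrow> (real \<times> real \<Rightarrow> real) \<Rightarrow> ('a \<Rightarrow> real) \<Rightarrow> ('a \<Rightarrow> real)
     \<Rightarrow> ('a \<Rightarrow> real \<times> real) \<Rightarrow> real \<Rightarrow> real \<Rightarrow> 'a measure" where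
  "cond_sigma M h Z0 Z1 WU w0 a =
     vimage_algebra (space M)
       (\<lambda>x. (h (a * Z0 x + sqrt (w0\<^sup>2 - a\<^sup>2) * Z1 x, fst (WU x)), snd (WU x), Z1 x))
       (borel :: (real \<times> real \<times> real) measure)"

definition lemma12_fun ::
  "'a measure \<Rightarrow> (real \<times> real \<Rightarrow> real) \<Rightarrow> ('a \<Rightarrow> real) \<Rightarrow> ('a \<Rightarrow> real)
     \<Rightarrow> ('a \<Rightarrow> real \<times> real) \<Rightarrow> real \<Rightarrow> real \<Rightarrow> real" where
  "lemma12_fun M h Z0 Z1 WU w0 a =
     (1 / a\<^sup>2) * (\<integral>x. (real_cond_exp M (cond_sigma M h Z0 Z1 WU w0 a) Z0 x)\<^sup>2 \<partial>M)"

end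

theory Submission
  imports Defs
begin

(* Write Q(t) = E[E[Z0 | F_t]^2], where F_t is generated by the observation
   (h(t Z0 + c_t Z1, W), U, Z1) with c_t = sqrt(w0^2 - t^2). Q only depends on the joint law,
   so one may work on the product space N(0,1) x N(0,1) x mu. Given 0 < a < b <= w0, adjoin a
   further independent standard normal p. A rotation of (p, Z0, Z1) produces i.i.d. standard
   normals (p', Z0', Z1'), still independent of (W, U), with b Z0' + c_b Z1' = a Z0 + c_a Z1
   and Z1' a linear combination of p and Z1. So the b-observation built from (Z0', Z1')
   generates a sub-sigma-algebra F' of G = sigma(p, F_a). Moreover a Z0' = b Z0 - s p' with
   s = sqrt(b^2 - a^2), and p' is independent of F'. Hence E[Z0' | F'] = (b/a) E[E[Z0 | G] | F'],
   and Jensen gives Q(b) <= (b/a)^2 E[E[Z0 | G]^2] = (b/a)^2 Q(a), the last step because p is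
   independent of everything else. *)

section \<open>Conditional expectation given a random variable\<close>

lemma sigma_finite_subalgebra_vimage_algebra:
  assumes "prob_space M" and "V \<in> measurable M S"
  shows "sigma_finite_subalgebra M (vimage_algebra (space M) V S)"
proof -
  interpret prob_space M by fact
  have "subalgebra M (vimage_algebra (space M) V S)"
    unfolding subalgebra_def using sets_image_in_sets[OF refl assms(2)] by simp
  then interpret finite_measure_subalgebra M "vimage_algebra (space M) V S"
    by unfold_locales
  show ?thesis by unfold_locales
qed

lemma measurable_vimage_algebra_comp:
  assumes "W \<in> \<Omega> \<rightarrow> space L" and "\<phi> \<in> measurable L K" and "\<And>x. x \<in> \<Omega> \<Longrightarrow> V x = \<phi> (W x)"
  shows "V \<in> measurable (vimage_algebra \<Omega> W L) K"
proof -
  have "(\<lambda>x. \<phi> (W x)) \<in> measurable (vimage_algebra \<Omega> W L) K"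
    using measurable_vimage_algebra1[OF assms(1)] assms(2) by measurable
  then show ?thesis
    by (rule measurable_cong[THEN iffD1, rotated]) (simp add: assms(3))
qed

lemma measurable_vimage_algebra_factor:
  assumes "T \<in> \<Omega> \<rightarrow> space S" and "W \<in> \<Omega> \<rightarrow> space L" and "\<phi> \<in> measurable L K"
    and "\<And>x. x \<in> \<Omega> \<Longrightarrow> v (T x) = \<phi> (W x)"
  shows "T \<in> measurable (vimage_algebra \<Omega> W L) (vimage_algebra (space S) v K)"
  using assms by (intro measurable_vimage_algebra2 measurable_vimage_algebra_comp) auto

lemma subalgebra_vimage_algebra_factor:
  assumes "W \<in> \<Omega> \<rightarrow> space L" and "\<phi> \<in> measurable L K" and "\<And>x. x \<in> \<Omega> \<Longrightarrow> V x = \<phi> (W x)"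
  shows "subalgebra (vimage_algebra \<Omega> W L) (vimage_algebra \<Omega> V K)"
  using sets_image_in_sets[OF _ measurable_vimage_algebra_comp[OF assms]]
  by (simp add: subalgebra_def)

lemma (in prob_space) distr_pair_snd:
  assumes "sigma_finite_measure K"
  shows "distr (M \<Otimes>\<^sub>M K) K snd = K"
proof (rule measure_eqI)
  interpret K: sigma_finite_measure K by fact
  interpret pair_sigma_finite M K ..
  fix A assume "A \<in> sets (distr (M \<Otimes>\<^sub>M K) K snd)"
  then have A: "A \<in> sets K" by simp
  then have "emeasure (distr (M \<Otimes>\<^sub>M K) K snd) A = emeasure (M \<Otimes>\<^sub>M K) (space M \<times> A)"
    by (auto simp: emeasure_distr space_pair_measure dest: sets.sets_into_space
        intro!: arg_cong2[where f=emeasure])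
  also have "\<dots> = emeasure K A"
    using A by (simp add: K.emeasure_pair_measure_Times emeasure_space_1)
  finally show "emeasure (distr (M \<Otimes>\<^sub>M K) K snd) A = emeasure K A" .
qed simp

lemma integrable_pair_fst:
  fixes f :: "'a \<Rightarrow> real"
  assumes "sigma_finite_measure M" and "prob_space N" and "integrable M f"
  shows "integrable (M \<Otimes>\<^sub>M N) (\<lambda>x. f (fst x))"
proof -
  interpret N: prob_space N by fact
  show ?thesis
    using integrable_distr_eq[of fst "M \<Otimes>\<^sub>M N" M f] assms(3) by (simp add: N.distr_pair_fst)
qed

lemma integrable_pair_snd:
  fixes f :: "'b \<Rightarrow> real"
  assumes "prob_space M" and "sigma_finite_measure N" and "integrable N f"
  shows "integrable (M \<Otimes>\<^sub>M N) (\<lambda>x. f (snd x))"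
  using integrable_distr_eq[of snd "M \<Otimes>\<^sub>M N" N f] assms
  by (simp add: prob_space.distr_pair_snd)

lemma integral_indicator_vimage_real_cond_exp:
  fixes f :: "'a \<Rightarrow> real"
  assumes "prob_space M" and "V \<in> measurable M S" and "integrable M f" and "C \<in> sets S"
  shows "(\<integral>x. indicator C (V x) * real_cond_exp M (vimage_algebra (space M) V S) f x \<partial>M)
       = (\<integral>x. indicator C (V x) * f x \<partial>M)"
proof -
  let ?F = "vimage_algebra (space M) V S"
  interpret sigma_finite_subalgebra M ?F
    by (rule sigma_finite_subalgebra_vimage_algebra[OF assms(1,2)])
  have B: "V -` C \<inter> space M \<in> sets ?F" by (rule in_vimage_algebra[OF assms(4)])
  have "(\<integral>x. indicator C (V x) * g x \<partial>M) = (\<integral>x\<in>V -` C \<inter> space M. g x \<partial>M)" for g :: "'a \<Rightarrow> real"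
    unfolding set_lebesgue_integral_def
    by (intro Bochner_Integration.integral_cong) (auto simp: indicator_def)
  then show ?thesis
    using real_cond_exp_intA[OF assms(3) B] by simp
qed

lemma real_cond_exp_vimage_charact:
  fixes f g :: "'a \<Rightarrow> real"
  assumes "prob_space M" and "V \<in> measurable M S"
    and "integrable M f" and "integrable M g"
    and "g \<in> borel_measurable (vimage_algebra (space M) V S)"
    and "\<And>C. C \<in> sets S \<Longrightarrow> (\<integral>x. indicator C (V x) * f x \<partial>M) = (\<integral>x. indicator C (V x) * g x \<partial>M)"
  shows "AE x in M. real_cond_exp M (vimage_algebra (space M) V S) f x = g x"
proof -
  interpret sigma_finite_subalgebra M "vimage_algebra (space M) V S"
    by (rule sigma_finite_subalgebra_vimage_algebra[OF assms(1,2)])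
  show ?thesis
  proof (rule real_cond_exp_charact[OF _ assms(3-5)])
    fix A assume "A \<in> sets (vimage_algebra (space M) V S)"
    then obtain C where C: "C \<in> sets S" and A: "A = V -` C \<inter> space M"
      using sets_vimage_algebra2[of V "space M" S] measurable_space[OF assms(2)] by auto
    have "(\<integral>x\<in>A. h x \<partial>M) = (\<integral>x. indicator C (V x) * h x \<partial>M)" for h :: "'a \<Rightarrow> real"
      unfolding set_lebesgue_integral_def A
      by (intro Bochner_Integration.integral_cong) (auto simp: indicator_def)
    then show "(\<integral>x\<in>A. f x \<partial>M) = (\<integral>x\<in>A. g x \<partial>M)"
      using assms(6)[OF C] by simp
  qed
qed

lemma real_cond_exp_distr:
  fixes f :: "'b \<Rightarrow> real"
  assumes M: "prob_space M" and T[measurable]: "T \<in> measurable M S"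
    and [measurable]: "f \<in> borel_measurable S" and fi: "integrable (distr M S T) f"
    and v[measurable]: "v \<in> measurable S K"
  shows "AE x in M. real_cond_exp M (vimage_algebra (space M) (\<lambda>x. v (T x)) K) (\<lambda>x. f (T x)) x
          = real_cond_exp (distr M S T) (vimage_algebra (space S) v K) f (T x)"
proof -
  let ?L = "distr M S T"
  let ?g = "real_cond_exp ?L (vimage_algebra (space S) v K) f"
  have L: "prob_space ?L" using M by (rule prob_space.prob_space_distr) simp
  interpret FL: sigma_finite_subalgebra ?L "vimage_algebra (space S) v K"
    using sigma_finite_subalgebra_vimage_algebra[OF L, of v K] by simp
  have "T \<in> measurable (vimage_algebra (space M) (\<lambda>x. v (T x)) K) (vimage_algebra (space S) v K)"
    by (rule measurable_vimage_algebra_factor[where \<phi>=id])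
       (use measurable_space[OF T] measurable_space[OF v] in auto)
  then have gT: "(\<lambda>x. ?g (T x)) \<in> borel_measurable (vimage_algebra (space M) (\<lambda>x. v (T x)) K)"
    by measurable
  have gi: "integrable ?L ?g" by (rule FL.real_cond_exp_int(1)[OF fi])
  show ?thesis
  proof (rule real_cond_exp_vimage_charact[OF M _ _ _ gT])
    show "integrable M (\<lambda>x. f (T x))" "integrable M (\<lambda>x. ?g (T x))"
      using fi gi by (simp_all add: integrable_distr_eq)
    fix C assume [measurable]: "C \<in> sets K"
    have "(\<integral>x. indicator C (v (T x)) * f (T x) \<partial>M) = (\<integral>y. indicator C (v y) * f y \<partial>?L)"
      by (simp add: integral_distr)
    also have "\<dots> = (\<integral>y. indicator C (v y) * ?g y \<partial>?L)"
      using integral_indicator_vimage_real_cond_exp[OF L _ fi, of v K C] by simp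
    also have "\<dots> = (\<integral>x. indicator C (v (T x)) * ?g (T x) \<partial>M)"
      by (simp add: integral_distr)
    finally show "(\<integral>x. indicator C (v (T x)) * f (T x) \<partial>M) = (\<integral>x. indicator C (v (T x)) * ?g (T x) \<partial>M)" .
  qed measurable
qed

lemma integral_real_cond_exp_sq_distr:
  fixes f :: "'b \<Rightarrow> real"
  assumes "prob_space M" and [measurable]: "T \<in> measurable M S"
    and [measurable]: "f \<in> borel_measurable S" and "integrable (distr M S T) f"
    and [measurable]: "v \<in> measurable S K"
  shows "(\<integral>x. (real_cond_exp M (vimage_algebra (space M) (\<lambda>x. v (T x)) K) (\<lambda>x. f (T x)) x)\<^sup>2 \<partial>M)
       = (\<integral>y. (real_cond_exp (distr M S T) (vimage_algebra (space S) v K) f y)\<^sup>2 \<partial>distr M S T)"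
proof -
  have "(\<integral>x. (real_cond_exp M (vimage_algebra (space M) (\<lambda>x. v (T x)) K) (\<lambda>x. f (T x)) x)\<^sup>2 \<partial>M)
     = (\<integral>x. (real_cond_exp (distr M S T) (vimage_algebra (space S) v K) f (T x))\<^sup>2 \<partial>M)"
    by (rule integral_cong_AE) (use real_cond_exp_distr[OF assms] in auto)
  also have "\<dots> = (\<integral>y. (real_cond_exp (distr M S T) (vimage_algebra (space S) v K) f y)\<^sup>2 \<partial>distr M S T)"
    by (simp add: integral_distr)
  finally show ?thesis .
qed

lemma real_cond_exp_pair_indep_fst:
  fixes f :: "'b \<Rightarrow> real"
  assumes N: "prob_space N" and K: "prob_space K"
    and fi: "integrable K f" and v[measurable]: "v \<in> measurable K S"
  shows "AE \<omega> in N \<Otimes>\<^sub>M K. real_cond_exp (N \<Otimes>\<^sub>M K)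
            (vimage_algebra (space (N \<Otimes>\<^sub>M K)) (\<lambda>\<omega>. (fst \<omega>, v (snd \<omega>))) (N \<Otimes>\<^sub>M S)) (\<lambda>\<omega>. f (snd \<omega>)) \<omega>
          = real_cond_exp K (vimage_algebra (space K) v S) f (snd \<omega>)"
proof -
  interpret K: prob_space K by fact
  interpret pair_prob_space N K by (simp add: pair_prob_space_def pair_sigma_finite_def N K prob_space_imp_sigma_finite)
  let ?g = "real_cond_exp K (vimage_algebra (space K) v S) f"
  have [measurable]: "f \<in> borel_measurable K" using fi by measurable
  have gi: "integrable K ?g"
    by (rule sigma_finite_subalgebra.real_cond_exp_int(1)[OF sigma_finite_subalgebra_vimage_algebra[OF K v] fi])
  have fP: "integrable (N \<Otimes>\<^sub>M K) (\<lambda>\<omega>. f (snd \<omega>))" and gP: "integrable (N \<Otimes>\<^sub>M K) (\<lambda>\<omega>. ?g (snd \<omega>))"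
    using integrable_pair_snd[OF N K.sigma_finite_measure_axioms] fi gi by auto
  have "snd \<in> measurable (vimage_algebra (space (N \<Otimes>\<^sub>M K)) (\<lambda>\<omega>. (fst \<omega>, v (snd \<omega>))) (N \<Otimes>\<^sub>M S))
      (vimage_algebra (space K) v S)"
    by (rule measurable_vimage_algebra_factor[where \<phi>=snd])
       (use measurable_space[OF v] in \<open>auto simp: space_pair_measure\<close>)
  then have gm: "(\<lambda>\<omega>. ?g (snd \<omega>)) \<in> borel_measurable
      (vimage_algebra (space (N \<Otimes>\<^sub>M K)) (\<lambda>\<omega>. (fst \<omega>, v (snd \<omega>))) (N \<Otimes>\<^sub>M S))"
    by measurable
  show ?thesis
  proof (rule real_cond_exp_vimage_charact[OF prob_space_axioms _ fP gP gm])
    fix C assume C[measurable]: "C \<in> sets (N \<Otimes>\<^sub>M S)"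
    have slice: "(\<integral>k. indicator C (x, v k) * f k \<partial>K) = (\<integral>k. indicator C (x, v k) * ?g k \<partial>K)" for x
      using integral_indicator_vimage_real_cond_exp[OF K v fi sets_Pair1[OF C, of x]] by (simp add: indicator_def)
    have "integrable (N \<Otimes>\<^sub>M K) (\<lambda>\<omega>. indicator C (fst \<omega>, v (snd \<omega>)) * h (snd \<omega>))"
      if "integrable (N \<Otimes>\<^sub>M K) (\<lambda>\<omega>. h (snd \<omega>))" and [measurable]: "h \<in> borel_measurable K"
      for h :: "'b \<Rightarrow> real"
      by (rule Bochner_Integration.integrable_bound[OF that(1)]) (auto simp: indicator_def)
    then show "(\<integral>\<omega>. indicator C (fst \<omega>, v (snd \<omega>)) * f (snd \<omega>) \<partial>(N \<Otimes>\<^sub>M K))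
        = (\<integral>\<omega>. indicator C (fst \<omega>, v (snd \<omega>)) * ?g (snd \<omega>) \<partial>(N \<Otimes>\<^sub>M K))"
      using integral_fst'[of "\<lambda>\<omega>. indicator C (fst \<omega>, v (snd \<omega>)) * f (snd \<omega>)"]
        integral_fst'[of "\<lambda>\<omega>. indicator C (fst \<omega>, v (snd \<omega>)) * ?g (snd \<omega>)"] fP gP
        borel_measurable_integrable[OF gi]
      by (simp add: slice)
  qed measurable
qed

lemma real_cond_exp_pair_fst_eq_0:
  fixes f :: "'a \<Rightarrow> real"
  assumes N: "prob_space N" and K: "prob_space K"
    and fi: "integrable N f" and f0: "(\<integral>x. f x \<partial>N) = 0" and v[measurable]: "v \<in> measurable K S"
  shows "AE \<omega> in N \<Otimes>\<^sub>M K.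
           real_cond_exp (N \<Otimes>\<^sub>M K) (vimage_algebra (space (N \<Otimes>\<^sub>M K)) (\<lambda>\<omega>. v (snd \<omega>)) S) (\<lambda>\<omega>. f (fst \<omega>)) \<omega> = 0"
proof -
  interpret N: prob_space N by fact
  interpret pair_prob_space N K by (simp add: pair_prob_space_def pair_sigma_finite_def N K prob_space_imp_sigma_finite)
  have [measurable]: "f \<in> borel_measurable N" using fi by measurable
  have fP: "integrable (N \<Otimes>\<^sub>M K) (\<lambda>\<omega>. f (fst \<omega>))"
    by (rule integrable_pair_fst[OF N.sigma_finite_measure_axioms K fi])
  show ?thesis
  proof (rule real_cond_exp_vimage_charact[OF prob_space_axioms _ fP])
    fix C assume C[measurable]: "C \<in> sets S"
    have "integrable (N \<Otimes>\<^sub>M K) (\<lambda>\<omega>. indicator C (v (snd \<omega>)) * f (fst \<omega>))"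
      by (rule Bochner_Integration.integrable_bound[OF fP]) (auto simp: indicator_def)
    then have "(\<integral>\<omega>. indicator C (v (snd \<omega>)) * f (fst \<omega>) \<partial>(N \<Otimes>\<^sub>M K))
        = (\<integral>x. (\<integral>k. indicator C (v k) \<partial>K) * f x \<partial>N)"
      using integral_fst'[of "\<lambda>\<omega>. indicator C (v (snd \<omega>)) * f (fst \<omega>)"] by simp
    also have "\<dots> = 0" using f0 by simp
    finally show "(\<integral>\<omega>. indicator C (v (snd \<omega>)) * f (fst \<omega>) \<partial>(N \<Otimes>\<^sub>M K))
        = (\<integral>\<omega>. indicator C (v (snd \<omega>)) * 0 \<partial>(N \<Otimes>\<^sub>M K))" by simp
  qed simp_all
qed

lemma (in sigma_finite_subalgebra)
  assumes "integrable M X" and "integrable M (\<lambda>x. (X x)\<^sup>2)"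
  shows integrable_real_cond_exp_sq: "integrable M (\<lambda>x. (real_cond_exp M F X x)\<^sup>2)"
    and integral_real_cond_exp_sq_le: "(\<integral>x. (real_cond_exp M F X x)\<^sup>2 \<partial>M) \<le> (\<integral>x. (X x)\<^sup>2 \<partial>M)"
proof -
  have J: "AE x in M. (real_cond_exp M F X x)\<^sup>2 \<le> real_cond_exp M F (\<lambda>x. (X x)\<^sup>2) x"
    by (rule real_cond_exp_jensens_inequality(2)[where I=UNIV and a=0 and b=0])
       (auto intro: assms convex_power2)
  have i2: "integrable M (real_cond_exp M F (\<lambda>x. (X x)\<^sup>2))" by (rule real_cond_exp_int(1)[OF assms(2)])
  show i1: "integrable M (\<lambda>x. (real_cond_exp M F X x)\<^sup>2)"
    by (rule Bochner_Integration.integrable_bound[OF i2]) (use J in auto)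
  have "(\<integral>x. (real_cond_exp M F X x)\<^sup>2 \<partial>M) \<le> (\<integral>x. real_cond_exp M F (\<lambda>x. (X x)\<^sup>2) x \<partial>M)"
    by (rule integral_mono_AE[OF i1 i2 J])
  also have "\<dots> = (\<integral>x. (X x)\<^sup>2 \<partial>M)" by (rule real_cond_exp_int(2)[OF assms(2)])
  finally show "(\<integral>x. (real_cond_exp M F X x)\<^sup>2 \<partial>M) \<le> (\<integral>x. (X x)\<^sup>2 \<partial>M)" .
qed

lemma integral_real_cond_exp_sq_le_add_noise:
  fixes X \<xi> :: "'a \<Rightarrow> real"
  assumes G: "sigma_finite_subalgebra M G" and F: "sigma_finite_subalgebra M F" and FG: "subalgebra G F"
    and X: "integrable M X" and X2: "integrable M (\<lambda>x. (X x)\<^sup>2)" and \<xi>: "integrable M \<xi>"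
    and \<xi>0: "AE x in M. real_cond_exp M F \<xi> x = 0"
  shows "(\<integral>x. (real_cond_exp M F (\<lambda>x. c * X x + \<xi> x) x)\<^sup>2 \<partial>M)
       \<le> c\<^sup>2 * (\<integral>x. (real_cond_exp M G X x)\<^sup>2 \<partial>M)"
proof -
  interpret G: sigma_finite_subalgebra M G by fact
  interpret F: sigma_finite_subalgebra M F by fact
  have "AE x in M. real_cond_exp M F (\<lambda>x. c * X x + \<xi> x) x
      = c * real_cond_exp M F X x + real_cond_exp M F \<xi> x"
    using F.real_cond_exp_add[OF integrable_mult_right[OF X] \<xi>, of c] F.real_cond_exp_cmult[OF X, of c]
    by eventually_elim simp
  moreover have "AE x in M. real_cond_exp M F (real_cond_exp M G X) x = real_cond_exp M F X x"
    by (rule F.real_cond_exp_nested_subalg[OF G.subalg FG X])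
  ultimately have sq: "AE x in M. (real_cond_exp M F (\<lambda>x. c * X x + \<xi> x) x)\<^sup>2
      = c\<^sup>2 * (real_cond_exp M F (real_cond_exp M G X) x)\<^sup>2"
    using \<xi>0 by eventually_elim (simp add: power_mult_distrib)
  have "(\<integral>x. (real_cond_exp M F (\<lambda>x. c * X x + \<xi> x) x)\<^sup>2 \<partial>M)
      = (\<integral>x. c\<^sup>2 * (real_cond_exp M F (real_cond_exp M G X) x)\<^sup>2 \<partial>M)"
    by (rule integral_cong_AE[OF _ _ sq]) simp_all
  also have "\<dots> = c\<^sup>2 * (\<integral>x. (real_cond_exp M F (real_cond_exp M G X) x)\<^sup>2 \<partial>M)"
    by (rule integral_mult_right_zero)
  also have "\<dots> \<le> c\<^sup>2 * (\<integral>x. (real_cond_exp M G X x)\<^sup>2 \<partial>M)"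
    using F.integral_real_cond_exp_sq_le[OF G.real_cond_exp_int(1)[OF X] G.integrable_real_cond_exp_sq[OF X X2]]
    by (simp add: mult_left_mono)
  finally show ?thesis .
qed

lemma real_cond_exp_measure_preserving_pair_fst_eq_0:
  fixes f :: "'a \<Rightarrow> real"
  assumes N: "prob_space N" and K: "prob_space K"
    and fi: "integrable N f" and f0: "(\<integral>x. f x \<partial>N) = 0" and v[measurable]: "v \<in> measurable K S"
    and T[measurable]: "T \<in> measurable (N \<Otimes>\<^sub>M K) (N \<Otimes>\<^sub>M K)" and law: "distr (N \<Otimes>\<^sub>M K) (N \<Otimes>\<^sub>M K) T = N \<Otimes>\<^sub>M K"
  shows "AE \<omega> in N \<Otimes>\<^sub>M K. real_cond_exp (N \<Otimes>\<^sub>M K)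
           (vimage_algebra (space (N \<Otimes>\<^sub>M K)) (\<lambda>\<omega>. v (snd (T \<omega>))) S) (\<lambda>\<omega>. f (fst (T \<omega>))) \<omega> = 0"
proof -
  let ?P = "N \<Otimes>\<^sub>M K"
  let ?E = "real_cond_exp ?P (vimage_algebra (space ?P) (\<lambda>\<omega>. v (snd \<omega>)) S) (\<lambda>\<omega>. f (fst \<omega>))"
  interpret N: prob_space N by fact
  interpret pair_prob_space N K by (simp add: pair_prob_space_def pair_sigma_finite_def N K prob_space_imp_sigma_finite)
  have [measurable]: "f \<in> borel_measurable N" using fi by measurable
  have "integrable ?P (\<lambda>\<omega>. f (fst \<omega>))"
    by (rule integrable_pair_fst[OF N.sigma_finite_measure_axioms K fi])
  then have "AE \<omega> in ?P. real_cond_exp ?P (vimage_algebra (space ?P) (\<lambda>\<omega>. v (snd (T \<omega>))) S)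
      (\<lambda>\<omega>. f (fst (T \<omega>))) \<omega> = ?E (T \<omega>)"
    using real_cond_exp_distr[OF prob_space_axioms T, of "\<lambda>\<omega>. f (fst \<omega>)" "\<lambda>\<omega>. v (snd \<omega>)" S]
    by (simp add: law)
  moreover have "AE \<omega> in ?P. ?E (T \<omega>) = 0"
  proof -
    have "AE \<omega> in distr ?P ?P T. ?E \<omega> = 0"
      unfolding law by (rule real_cond_exp_pair_fst_eq_0[OF N K fi f0 v])
    then show ?thesis by (simp add: AE_distr_iff)
  qed
  ultimately show ?thesis by eventually_elim simp
qed

section \<open>Rotation invariance of the standard normal distribution\<close>

abbreviation std_normal :: "real measure" where
  "std_normal \<equiv> std_normal_distribution"

lemma borel_measurable_fst[measurable]:
  "(fst :: 'a::second_countable_topology \<times> 'b::second_countable_topology \<Rightarrow> 'a) \<in> borel_measurable borel"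
  by (subst borel_prod[symmetric]) simp

lemma borel_measurable_snd[measurable]:
  "(snd :: 'a::second_countable_topology \<times> 'b::second_countable_topology \<Rightarrow> 'b) \<in> borel_measurable borel"
  by (subst borel_prod[symmetric]) simp

lemma prob_space_std_normal: "prob_space std_normal"
  by (rule prob_space_normal_density) simp

lemma sets_std_normal[measurable_cong]: "sets std_normal = sets borel"
  by simp

lemma sets_std_normal_pair_borel:
  "sets (borel \<Otimes>\<^sub>M std_normal) = sets (borel :: ('a::second_countable_topology \<times> real) measure)"
  "sets (std_normal \<Otimes>\<^sub>M std_normal) = sets (borel :: (real \<times> real) measure)"
  by (metis borel_prod sets_density sets_lborel sets_pair_measure_cong)+

lemma borel_measurable_nn_integral_std_normal[measurable (raw)]:
  fixes H :: "'a::second_countable_topology \<Rightarrow> real \<Rightarrow> ennreal"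
  assumes "case_prod H \<in> borel_measurable borel"
  shows "(\<lambda>x. \<integral>\<^sup>+y. H x y \<partial>std_normal) \<in> borel_measurable borel"
proof -
  interpret prob_space std_normal by (rule prob_space_std_normal)
  show ?thesis
    using assms by (intro borel_measurable_nn_integral)
      (simp add: measurable_cong_sets[OF sets_std_normal_pair_borel(1) refl])
qed

lemma nn_integral_std_normal_swap:
  fixes f :: "real \<Rightarrow> real \<Rightarrow> ennreal"
  assumes "case_prod f \<in> borel_measurable borel"
  shows "(\<integral>\<^sup>+y. \<integral>\<^sup>+x. f x y \<partial>std_normal \<partial>std_normal) = (\<integral>\<^sup>+x. \<integral>\<^sup>+y. f x y \<partial>std_normal \<partial>std_normal)"
proof -
  interpret N: prob_space std_normal by (rule prob_space_std_normal)
  interpret pair_sigma_finite std_normal std_normal ..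
  show ?thesis
    using assms by (intro Fubini') (simp add: measurable_cong_sets[OF sets_std_normal_pair_borel(2) refl])
qed

lemma std_normal_density_mult_orthogonal:
  fixes a b c d x y :: real
  assumes "a\<^sup>2 + c\<^sup>2 = 1" and "b\<^sup>2 + d\<^sup>2 = 1" and "a * b + c * d = 0"
  shows "std_normal_density (a*x + b*y) * std_normal_density (c*x + d*y)
       = std_normal_density x * std_normal_density y"
proof -
  have "(a*x + b*y)\<^sup>2 + (c*x + d*y)\<^sup>2 = (a\<^sup>2 + c\<^sup>2) * x\<^sup>2 + 2 * (a*b + c*d) * x * y + (b\<^sup>2 + d\<^sup>2) * y\<^sup>2"
    by (simp add: power2_eq_square algebra_simps)
  then have "(a*x + b*y)\<^sup>2 + (c*x + d*y)\<^sup>2 = x\<^sup>2 + y\<^sup>2"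
    using assms by simp
  then show ?thesis
    by (simp add: std_normal_density_def mult_exp_exp add_divide_distrib[symmetric])
qed

lemma nn_integral_lborel_affine:
  fixes f :: "real \<Rightarrow> ennreal"
  assumes "f \<in> borel_measurable borel" and "c \<noteq> 0"
  shows "(\<integral>\<^sup>+x. f (t + c * x) \<partial>lborel) = ennreal (1 / \<bar>c\<bar>) * (\<integral>\<^sup>+x. f x \<partial>lborel)"
proof -
  have "ennreal (1 / \<bar>c\<bar>) * (\<integral>\<^sup>+x. f x \<partial>lborel)
      = ennreal (1 / \<bar>c\<bar>) * ennreal \<bar>c\<bar> * (\<integral>\<^sup>+x. f (t + c * x) \<partial>lborel)"
    by (simp add: nn_integral_real_affine[OF assms, of t] mult.assoc)
  also have "ennreal (1 / \<bar>c\<bar>) * ennreal \<bar>c\<bar> = 1"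
    using assms(2) by (simp flip: ennreal_mult)
  finally show ?thesis by simp
qed

lemma nn_integral_lborel_unimodular:
  fixes F :: "real \<times> real \<Rightarrow> ennreal" and a b c d :: real
  assumes [measurable]: "F \<in> borel_measurable borel" and d: "d \<noteq> 0" and det: "\<bar>a*d - b*c\<bar> = 1"
  shows "(\<integral>\<^sup>+x. \<integral>\<^sup>+y. F (a*x + b*y, c*x + d*y) \<partial>lborel \<partial>lborel) = (\<integral>\<^sup>+x. \<integral>\<^sup>+y. F (x, y) \<partial>lborel \<partial>lborel)"
proof -
  define e where "e = (a*d - b*c) / d"
  have e: "e \<noteq> 0" "1 / \<bar>e\<bar> = \<bar>d\<bar>"
    using det d by (auto simp: e_def abs_divide)
  have shear_y: "(\<integral>\<^sup>+y. F (a*x + b*y, c*x + d*y) \<partial>lborel) = ennreal (1/\<bar>d\<bar>) * (\<integral>\<^sup>+w. F (e*x + b/d*w, w) \<partial>lborel)" for x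
  proof -
    have "(\<lambda>y. F (a*x + b*y, c*x + d*y)) = (\<lambda>y. (\<lambda>w. F (e*x + b/d*w, w)) (c*x + d*y))"
      using d by (auto simp: e_def field_simps intro!: ext arg_cong[where f=F])
    then show ?thesis
      using nn_integral_lborel_affine[OF _ d, of "\<lambda>w. F (e*x + b/d*w, w)" "c*x"] by simp
  qed
  have shear_x: "(\<integral>\<^sup>+x. F (e*x + b/d*w, w) \<partial>lborel) = ennreal \<bar>d\<bar> * (\<integral>\<^sup>+u. F (u, w) \<partial>lborel)" for w
    using nn_integral_lborel_affine[OF _ e(1), of "\<lambda>u. F (u, w)" "b/d*w"] e(2) by (simp add: add.commute)
  have "(\<integral>\<^sup>+x. \<integral>\<^sup>+y. F (a*x + b*y, c*x + d*y) \<partial>lborel \<partial>lborel)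
      = ennreal (1/\<bar>d\<bar>) * (\<integral>\<^sup>+x. \<integral>\<^sup>+w. F (e*x + b/d*w, w) \<partial>lborel \<partial>lborel)"
    unfolding shear_y by (rule nn_integral_cmult) measurable
  also have "(\<integral>\<^sup>+x. \<integral>\<^sup>+w. F (e*x + b/d*w, w) \<partial>lborel \<partial>lborel) = (\<integral>\<^sup>+w. \<integral>\<^sup>+x. F (e*x + b/d*w, w) \<partial>lborel \<partial>lborel)"
    by (rule lborel_pair.Fubini'[symmetric]) measurable
  also have "\<dots> = ennreal \<bar>d\<bar> * (\<integral>\<^sup>+w. \<integral>\<^sup>+u. F (u, w) \<partial>lborel \<partial>lborel)"
    unfolding shear_x by (rule nn_integral_cmult) measurable
  also have "(\<integral>\<^sup>+w. \<integral>\<^sup>+u. F (u, w) \<partial>lborel \<partial>lborel) = (\<integral>\<^sup>+u. \<integral>\<^sup>+w. F (u, w) \<partial>lborel \<partial>lborel)"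
    by (rule lborel_pair.Fubini') measurable
  finally show ?thesis
    using d by (simp add: mult.assoc[symmetric] flip: ennreal_mult)
qed

lemma nn_integral_std_normal_orthogonal:
  fixes F :: "real \<times> real \<Rightarrow> ennreal" and a b c d :: real
  assumes [measurable]: "F \<in> borel_measurable borel"
    and o1: "a\<^sup>2 + c\<^sup>2 = 1" and o2: "b\<^sup>2 + d\<^sup>2 = 1" and o3: "a * b + c * d = 0" and d: "d \<noteq> 0"
  shows "(\<integral>\<^sup>+x. \<integral>\<^sup>+y. F (a*x + b*y, c*x + d*y) \<partial>std_normal \<partial>std_normal)
       = (\<integral>\<^sup>+x. \<integral>\<^sup>+y. F (x, y) \<partial>std_normal \<partial>std_normal)"
proof -
  let ?p = "\<lambda>x. ennreal (std_normal_density x)"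
  define G where "G = (\<lambda>z::real \<times> real. ?p (fst z) * ?p (snd z) * F z)"
  have [measurable]: "G \<in> borel_measurable borel" unfolding G_def by measurable
  have "(a*d - b*c)\<^sup>2 = (a\<^sup>2 + c\<^sup>2) * (b\<^sup>2 + d\<^sup>2) - (a*b + c*d)\<^sup>2"
    by (simp add: power2_eq_square algebra_simps)
  then have det: "\<bar>a*d - b*c\<bar> = 1"
    using o1 o2 o3 by (auto simp: power2_eq_1_iff)
  have density: "(\<integral>\<^sup>+x. \<integral>\<^sup>+y. H x y \<partial>std_normal \<partial>std_normal)
      = (\<integral>\<^sup>+x. \<integral>\<^sup>+y. ?p x * ?p y * H x y \<partial>lborel \<partial>lborel)"
    if [measurable]: "case_prod H \<in> borel_measurable borel" for H :: "real \<Rightarrow> real \<Rightarrow> ennreal"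
  proof -
    have [measurable]: "H x \<in> borel_measurable borel" for x
    proof -
      have "(\<lambda>y. case_prod H (x, y)) \<in> borel_measurable borel" by measurable
      then show ?thesis by simp
    qed
    have "(\<integral>\<^sup>+x. \<integral>\<^sup>+y. H x y \<partial>std_normal \<partial>std_normal) = (\<integral>\<^sup>+x. ?p x * (\<integral>\<^sup>+y. H x y \<partial>std_normal) \<partial>lborel)"
      by (subst nn_integral_density) auto
    also have "\<dots> = (\<integral>\<^sup>+x. ?p x * (\<integral>\<^sup>+y. ?p y * H x y \<partial>lborel) \<partial>lborel)"
      by (subst nn_integral_density) auto
    also have "\<dots> = (\<integral>\<^sup>+x. \<integral>\<^sup>+y. ?p x * (?p y * H x y) \<partial>lborel \<partial>lborel)"
      by (intro nn_integral_cong nn_integral_cmult[symmetric]) measurable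
    finally show ?thesis by (simp add: mult.assoc)
  qed
  have "(\<integral>\<^sup>+x. \<integral>\<^sup>+y. F (a*x + b*y, c*x + d*y) \<partial>std_normal \<partial>std_normal)
      = (\<integral>\<^sup>+x. \<integral>\<^sup>+y. G (a*x + b*y, c*x + d*y) \<partial>lborel \<partial>lborel)"
    unfolding G_def by (subst density, measurable, intro nn_integral_cong)
       (simp add: ennreal_mult'[symmetric] std_normal_density_mult_orthogonal[OF o1 o2 o3])
  also have "\<dots> = (\<integral>\<^sup>+x. \<integral>\<^sup>+y. G (x, y) \<partial>lborel \<partial>lborel)"
    by (rule nn_integral_lborel_unimodular[OF _ d det]) measurable
  also have "\<dots> = (\<integral>\<^sup>+x. \<integral>\<^sup>+y. F (x, y) \<partial>std_normal \<partial>std_normal)"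
    unfolding G_def by (subst density) measurable
  finally show ?thesis .
qed

lemma nn_integral_std_normal_reverse3:
  fixes G :: "real \<times> real \<times> real \<Rightarrow> ennreal"
  assumes [measurable]: "G \<in> borel_measurable borel"
  shows "(\<integral>\<^sup>+z. \<integral>\<^sup>+q. \<integral>\<^sup>+x. G (x, q, z) \<partial>std_normal \<partial>std_normal \<partial>std_normal)
       = (\<integral>\<^sup>+x. \<integral>\<^sup>+q. \<integral>\<^sup>+z. G (x, q, z) \<partial>std_normal \<partial>std_normal \<partial>std_normal)"
proof -
  let ?N = std_normal
  have "(\<integral>\<^sup>+z. \<integral>\<^sup>+q. \<integral>\<^sup>+x. G (x, q, z) \<partial>?N \<partial>?N \<partial>?N) = (\<integral>\<^sup>+z. \<integral>\<^sup>+x. \<integral>\<^sup>+q. G (x, q, z) \<partial>?N \<partial>?N \<partial>?N)"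
    by (rule nn_integral_cong, rule nn_integral_std_normal_swap) measurable
  also have "\<dots> = (\<integral>\<^sup>+x. \<integral>\<^sup>+z. \<integral>\<^sup>+q. G (x, q, z) \<partial>?N \<partial>?N \<partial>?N)"
    by (rule nn_integral_std_normal_swap) measurable
  also have "\<dots> = (\<integral>\<^sup>+x. \<integral>\<^sup>+q. \<integral>\<^sup>+z. G (x, q, z) \<partial>?N \<partial>?N \<partial>?N)"
    by (rule nn_integral_cong, rule nn_integral_std_normal_swap) measurable
  finally show ?thesis .
qed

lemma nn_integral_std_normal_rotation3:
  fixes H :: "real \<times> real \<times> real \<Rightarrow> ennreal" and \<rho> \<sigma> \<alpha> \<beta> :: real
  assumes [measurable]: "H \<in> borel_measurable borel"
    and r1: "\<rho>\<^sup>2 + \<sigma>\<^sup>2 = 1" and r2: "\<alpha>\<^sup>2 + \<beta>\<^sup>2 = 1" and s0: "\<sigma> \<noteq> 0" and a0: "\<alpha> \<noteq> 0"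
  shows "(\<integral>\<^sup>+p. \<integral>\<^sup>+q. \<integral>\<^sup>+r. H (-\<beta>*q + \<alpha>*(\<rho>*p - \<sigma>*r), \<alpha>*q + \<beta>*(\<rho>*p - \<sigma>*r), \<sigma>*p + \<rho>*r)
            \<partial>std_normal \<partial>std_normal \<partial>std_normal)
       = (\<integral>\<^sup>+p. \<integral>\<^sup>+q. \<integral>\<^sup>+r. H (p, q, r) \<partial>std_normal \<partial>std_normal \<partial>std_normal)"
proof -
  let ?N = std_normal
  have "(\<integral>\<^sup>+p. \<integral>\<^sup>+q. \<integral>\<^sup>+r. H (-\<beta>*q + \<alpha>*(\<rho>*p - \<sigma>*r), \<alpha>*q + \<beta>*(\<rho>*p - \<sigma>*r), \<sigma>*p + \<rho>*r) \<partial>?N \<partial>?N \<partial>?N)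
      = (\<integral>\<^sup>+q. \<integral>\<^sup>+p. \<integral>\<^sup>+r. H (-\<beta>*q + \<alpha>*(\<rho>*p - \<sigma>*r), \<alpha>*q + \<beta>*(\<rho>*p - \<sigma>*r), \<sigma>*p + \<rho>*r) \<partial>?N \<partial>?N \<partial>?N)"
    by (rule nn_integral_std_normal_swap) measurable
  also have "\<dots> = (\<integral>\<^sup>+q. \<integral>\<^sup>+p. \<integral>\<^sup>+r. H (-\<beta>*q + \<alpha>*r, \<alpha>*q + \<beta>*r, p) \<partial>?N \<partial>?N \<partial>?N)"
  proof (rule nn_integral_cong)
    fix q
    have "(\<integral>\<^sup>+p. \<integral>\<^sup>+r. (\<lambda>z. H (-\<beta>*q + \<alpha>* snd z, \<alpha>*q + \<beta>* snd z, fst z)) (\<sigma>*p + \<rho>*r, \<rho>*p + (-\<sigma>)*r) \<partial>?N \<partial>?N)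
        = (\<integral>\<^sup>+p. \<integral>\<^sup>+r. (\<lambda>z. H (-\<beta>*q + \<alpha>* snd z, \<alpha>*q + \<beta>* snd z, fst z)) (p, r) \<partial>?N \<partial>?N)"
      by (rule nn_integral_std_normal_orthogonal) (use r1 s0 in \<open>auto simp: algebra_simps\<close>)
    then show "(\<integral>\<^sup>+p. \<integral>\<^sup>+r. H (-\<beta>*q + \<alpha>*(\<rho>*p - \<sigma>*r), \<alpha>*q + \<beta>*(\<rho>*p - \<sigma>*r), \<sigma>*p + \<rho>*r) \<partial>?N \<partial>?N)
        = (\<integral>\<^sup>+p. \<integral>\<^sup>+r. H (-\<beta>*q + \<alpha>*r, \<alpha>*q + \<beta>*r, p) \<partial>?N \<partial>?N)"
      by simp
  qed
  also have "\<dots> = (\<integral>\<^sup>+p. \<integral>\<^sup>+q. \<integral>\<^sup>+r. H (-\<beta>*q + \<alpha>*r, \<alpha>*q + \<beta>*r, p) \<partial>?N \<partial>?N \<partial>?N)"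
    by (rule nn_integral_std_normal_swap) measurable
  also have "\<dots> = (\<integral>\<^sup>+p. \<integral>\<^sup>+q. \<integral>\<^sup>+r. H (r, q, p) \<partial>?N \<partial>?N \<partial>?N)"
  proof (rule nn_integral_cong)
    fix p
    have "(\<integral>\<^sup>+q. \<integral>\<^sup>+r. (\<lambda>z. H (snd z, fst z, p)) (\<alpha>*q + \<beta>*r, (-\<beta>)*q + \<alpha>*r) \<partial>?N \<partial>?N)
        = (\<integral>\<^sup>+q. \<integral>\<^sup>+r. (\<lambda>z. H (snd z, fst z, p)) (q, r) \<partial>?N \<partial>?N)"
      by (rule nn_integral_std_normal_orthogonal) (use r2 a0 in \<open>auto simp: algebra_simps\<close>)
    then show "(\<integral>\<^sup>+q. \<integral>\<^sup>+r. H (-\<beta>*q + \<alpha>*r, \<alpha>*q + \<beta>*r, p) \<partial>?N \<partial>?N)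
        = (\<integral>\<^sup>+q. \<integral>\<^sup>+r. H (r, q, p) \<partial>?N \<partial>?N)"
      by simp
  qed
  also have "\<dots> = (\<integral>\<^sup>+p. \<integral>\<^sup>+q. \<integral>\<^sup>+r. H (p, q, r) \<partial>?N \<partial>?N \<partial>?N)"
    by (rule nn_integral_std_normal_reverse3) measurable
  finally show ?thesis .
qed



lemma nn_integral_std_normal_pair_iterated:
  fixes \<mu> :: "'b measure"
  assumes \<mu>: "prob_space \<mu>" and [measurable]: "G \<in> borel_measurable (std_normal \<Otimes>\<^sub>M ((std_normal \<Otimes>\<^sub>M std_normal) \<Otimes>\<^sub>M \<mu>))"
  shows "integral\<^sup>N (std_normal \<Otimes>\<^sub>M ((std_normal \<Otimes>\<^sub>M std_normal) \<Otimes>\<^sub>M \<mu>)) G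
       = (\<integral>\<^sup>+p. \<integral>\<^sup>+q. \<integral>\<^sup>+r. \<integral>\<^sup>+y. G (p, (q, r), y) \<partial>\<mu> \<partial>std_normal \<partial>std_normal \<partial>std_normal)"
proof -
  interpret \<mu>: prob_space \<mu> by fact
  interpret N: prob_space std_normal by (rule prob_space_std_normal)
  interpret NN: pair_prob_space std_normal std_normal ..
  interpret K: pair_prob_space "std_normal \<Otimes>\<^sub>M std_normal" \<mu> ..
  have "integral\<^sup>N (std_normal \<Otimes>\<^sub>M ((std_normal \<Otimes>\<^sub>M std_normal) \<Otimes>\<^sub>M \<mu>)) G
      = (\<integral>\<^sup>+p. \<integral>\<^sup>+k. G (p, k) \<partial>((std_normal \<Otimes>\<^sub>M std_normal) \<Otimes>\<^sub>M \<mu>) \<partial>std_normal)"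
    by (rule K.nn_integral_fst[symmetric]) measurable
  also have "\<dots> = (\<integral>\<^sup>+p. \<integral>\<^sup>+qr. \<integral>\<^sup>+y. G (p, qr, y) \<partial>\<mu> \<partial>(std_normal \<Otimes>\<^sub>M std_normal) \<partial>std_normal)"
    by (intro nn_integral_cong \<mu>.nn_integral_fst[symmetric]) measurable
  also have "\<dots> = (\<integral>\<^sup>+p. \<integral>\<^sup>+q. \<integral>\<^sup>+r. \<integral>\<^sup>+y. G (p, (q, r), y) \<partial>\<mu> \<partial>std_normal \<partial>std_normal \<partial>std_normal)"
    by (intro nn_integral_cong N.nn_integral_fst[symmetric, where f="\<lambda>qr. \<integral>\<^sup>+y. G (_, qr, y) \<partial>\<mu>", simplified])
      measurable
  finally show ?thesis .
qed

text \<open>A rotation of \<open>(p, q, r)\<close>: first by \<open>(\<rho>, \<sigma>)\<close> in the \<open>(p, r)\<close>-plane, then by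
  \<open>(\<alpha>, \<beta>)\<close> in the plane of \<open>q\<close> and the rotated \<open>p\<close>-coordinate, which becomes the new first
  coordinate.\<close>

definition gauss_rotation :: "real \<Rightarrow> real \<Rightarrow> real \<Rightarrow> real \<Rightarrow> real \<times> (real \<times> real) \<times> 'b \<Rightarrow> real \<times> (real \<times> real) \<times> 'b"
  where "gauss_rotation \<rho> \<sigma> \<alpha> \<beta> =
    (\<lambda>(p, (q, r), y). (-\<beta>*q + \<alpha>*(\<rho>*p - \<sigma>*r), (\<alpha>*q + \<beta>*(\<rho>*p - \<sigma>*r), \<sigma>*p + \<rho>*r), y))"

lemma measurable_gauss_rotation[measurable]:
  "gauss_rotation \<rho> \<sigma> \<alpha> \<beta> \<in> measurable (std_normal \<Otimes>\<^sub>M ((std_normal \<Otimes>\<^sub>M std_normal) \<Otimes>\<^sub>M \<mu>))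
     (std_normal \<Otimes>\<^sub>M ((std_normal \<Otimes>\<^sub>M std_normal) \<Otimes>\<^sub>M \<mu>))"
  unfolding gauss_rotation_def split_beta' by measurable

lemma distr_gauss_rotation:
  fixes \<mu> :: "'b measure"
  assumes \<mu>: "prob_space \<mu>"
    and "\<rho>\<^sup>2 + \<sigma>\<^sup>2 = 1" and "\<alpha>\<^sup>2 + \<beta>\<^sup>2 = 1" and "\<sigma> \<noteq> 0" and "\<alpha> \<noteq> 0"
  shows "distr (std_normal \<Otimes>\<^sub>M ((std_normal \<Otimes>\<^sub>M std_normal) \<Otimes>\<^sub>M \<mu>))
           (std_normal \<Otimes>\<^sub>M ((std_normal \<Otimes>\<^sub>M std_normal) \<Otimes>\<^sub>M \<mu>)) (gauss_rotation \<rho> \<sigma> \<alpha> \<beta>)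
       = std_normal \<Otimes>\<^sub>M ((std_normal \<Otimes>\<^sub>M std_normal) \<Otimes>\<^sub>M \<mu>)"
    (is "distr ?P ?P ?T = ?P")
proof (rule measure_eqI)
  interpret \<mu>: prob_space \<mu> by fact
  show "sets (distr ?P ?P ?T) = sets ?P" by simp
  fix A assume "A \<in> sets (distr ?P ?P ?T)"
  then have A[measurable]: "A \<in> sets ?P" by (simp only: sets_distr)
  define H where "H = (\<lambda>t::real \<times> real \<times> real. \<integral>\<^sup>+y. indicator A (fst t, (fst (snd t), snd (snd t)), y) \<partial>\<mu>)"
  have sets_eq: "sets (std_normal \<Otimes>\<^sub>M (std_normal \<Otimes>\<^sub>M std_normal)) = sets (borel :: (real \<times> real \<times> real) measure)"
    unfolding borel_prod[symmetric]
    by (intro sets_pair_measure_cong) (simp_all only: sets_std_normal)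
  have "H \<in> borel_measurable (std_normal \<Otimes>\<^sub>M (std_normal \<Otimes>\<^sub>M std_normal))"
    unfolding H_def by measurable
  then have [measurable]: "H \<in> borel_measurable borel"
    unfolding measurable_cong_sets[OF sets_eq refl] .
  have "emeasure (distr ?P ?P ?T) A = (\<integral>\<^sup>+\<omega>. indicator A \<omega> \<partial>distr ?P ?P ?T)"
    by (rule nn_integral_indicator[symmetric]) (simp only: sets_distr A)
  also have "\<dots> = (\<integral>\<^sup>+\<omega>. indicator A (?T \<omega>) \<partial>?P)"
    by (rule nn_integral_distr) measurable
  also have "\<dots> = (\<integral>\<^sup>+p. \<integral>\<^sup>+q. \<integral>\<^sup>+r. H (-\<beta>*q + \<alpha>*(\<rho>*p - \<sigma>*r), \<alpha>*q + \<beta>*(\<rho>*p - \<sigma>*r), \<sigma>*p + \<rho>*r)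
      \<partial>std_normal \<partial>std_normal \<partial>std_normal)"
    using nn_integral_std_normal_pair_iterated[OF \<mu>, of "\<lambda>\<omega>. indicator A (?T \<omega>)"]
    by (simp only: measurable_compose[OF measurable_gauss_rotation borel_measurable_indicator[OF A]])
       (simp add: H_def gauss_rotation_def)
  also have "\<dots> = (\<integral>\<^sup>+p. \<integral>\<^sup>+q. \<integral>\<^sup>+r. H (p, q, r) \<partial>std_normal \<partial>std_normal \<partial>std_normal)"
    by (rule nn_integral_std_normal_rotation3[OF _ assms(2-5)]) measurable
  also have "\<dots> = emeasure ?P A"
    using nn_integral_std_normal_pair_iterated[OF \<mu> borel_measurable_indicator[OF A]]
    by (simp add: H_def nn_integral_indicator[OF A])
  finally show "emeasure (distr ?P ?P ?T) A = emeasure ?P A" .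
qed

section \<open>The Gaussian observation model\<close>

definition observation :: "(real \<times> real \<Rightarrow> real) \<Rightarrow> real \<Rightarrow> real \<Rightarrow> (real \<times> real) \<times> (real \<times> real) \<Rightarrow> real \<times> real \<times> real"
  where "observation h w0 t = (\<lambda>((z0, z1), (w, u)). (h (t * z0 + sqrt (w0\<^sup>2 - t\<^sup>2) * z1, w), u, z1))"

lemma measurable_observation[measurable]:
  assumes [measurable]: "h \<in> borel_measurable borel" and [measurable_cong]: "sets \<mu> = sets borel"
  shows "observation h w0 t \<in> measurable ((std_normal \<Otimes>\<^sub>M std_normal) \<Otimes>\<^sub>M \<mu>) borel"
  unfolding observation_def split_beta' by measurable

definition estimator_second_moment :: "(real \<times> real) measure \<Rightarrow> (real \<times> real \<Rightarrow> real) \<Rightarrow> real \<Rightarrow> real \<Rightarrow> real"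
  where "estimator_second_moment \<mu> h w0 t =
    (\<integral>k. (real_cond_exp ((std_normal \<Otimes>\<^sub>M std_normal) \<Otimes>\<^sub>M \<mu>)
           (vimage_algebra (space ((std_normal \<Otimes>\<^sub>M std_normal) \<Otimes>\<^sub>M \<mu>)) (observation h w0 t) borel)
           (\<lambda>k. fst (fst k)) k)\<^sup>2 \<partial>((std_normal \<Otimes>\<^sub>M std_normal) \<Otimes>\<^sub>M \<mu>))"

lemma integrable_std_normal_pair_fst_power:
  assumes "prob_space \<mu>"
  shows "integrable ((std_normal \<Otimes>\<^sub>M std_normal) \<Otimes>\<^sub>M \<mu>) (\<lambda>k. (fst (fst k)) ^ n)"
proof -
  interpret N: prob_space std_normal by (rule prob_space_std_normal)
  interpret NN: pair_prob_space std_normal std_normal ..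
  have "integrable std_normal (\<lambda>x. x ^ n)"
    by (rule integrable_std_normal_distribution_moment)
  then have "integrable (std_normal \<Otimes>\<^sub>M std_normal) (\<lambda>z. (fst z) ^ n)"
    by (rule integrable_pair_fst[OF N.sigma_finite_measure_axioms prob_space_std_normal])
  then show ?thesis
    by (rule integrable_pair_fst[OF NN.sigma_finite_measure_axioms assms])
qed

lemma joint_distr_eq_product:
  fixes M :: "'a measure" and Z0 Z1 :: "'a \<Rightarrow> real" and WU :: "'a \<Rightarrow> real \<times> real"
    and \<mu> :: "(real \<times> real) measure"
  assumes "prob_space M"
    and D0: "distributed M lborel Z0 std_normal_density"
    and D1: "distributed M lborel Z1 std_normal_density"
    and I1: "prob_space.indep_var M borel Z0 borel Z1"
    and "sets \<mu> = sets borel" and "distr M borel WU = \<mu>"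
    and I2: "prob_space.indep_var M borel (\<lambda>x. (Z0 x, Z1 x)) borel WU"
  shows "distr M ((std_normal \<Otimes>\<^sub>M std_normal) \<Otimes>\<^sub>M \<mu>) (\<lambda>x. ((Z0 x, Z1 x), WU x))
       = (std_normal \<Otimes>\<^sub>M std_normal) \<Otimes>\<^sub>M \<mu>"
proof -
  interpret prob_space M by fact
  have "distr M borel Z = std_normal" if "distributed M lborel Z std_normal_density" for Z
  proof -
    have "distr M borel Z = distr M lborel Z" by (rule distr_cong) auto
    also have "\<dots> = std_normal" by (rule distributed_distr_eq_density[OF that])
    finally show ?thesis .
  qed
  then have "distr M borel (\<lambda>x. (Z0 x, Z1 x)) = std_normal \<Otimes>\<^sub>M std_normal"
    using I1 D0 D1 unfolding indep_var_distribution_eq by (simp add: borel_prod)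
  moreover have "distr M borel (\<lambda>x. (Z0 x, Z1 x)) \<Otimes>\<^sub>M distr M borel WU
      = distr M (borel \<Otimes>\<^sub>M borel) (\<lambda>x. ((Z0 x, Z1 x), WU x))"
    using I2 unfolding indep_var_distribution_eq by simp
  moreover have "sets ((std_normal \<Otimes>\<^sub>M std_normal) \<Otimes>\<^sub>M \<mu>) = sets (borel \<Otimes>\<^sub>M borel :: ((real \<times> real) \<times> (real \<times> real)) measure)"
    by (rule sets_pair_measure_cong) (simp_all only: assms(5) sets_std_normal_pair_borel(2))
  ultimately show ?thesis
    using assms(6) by (simp cong: distr_cong)
qed

lemma lemma12_fun_eq_estimator_second_moment:
  fixes M :: "'a measure" and Z0 Z1 :: "'a \<Rightarrow> real" and WU :: "'a \<Rightarrow> real \<times> real"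
    and \<mu> :: "(real \<times> real) measure"
  assumes M: "prob_space M"
    and D0: "distributed M lborel Z0 std_normal_density"
    and D1: "distributed M lborel Z1 std_normal_density"
    and "prob_space.indep_var M borel Z0 borel Z1"
    and [measurable]: "WU \<in> borel_measurable M"
    and \<mu>: "prob_space \<mu>" and [measurable_cong]: "sets \<mu> = sets borel"
    and "distr M borel WU = \<mu>"
    and "prob_space.indep_var M borel (\<lambda>x. (Z0 x, Z1 x)) borel WU"
    and [measurable]: "h \<in> borel_measurable borel"
  shows "lemma12_fun M h Z0 Z1 WU w0 t = estimator_second_moment \<mu> h w0 t / t\<^sup>2"
proof -
  let ?K = "(std_normal \<Otimes>\<^sub>M std_normal) \<Otimes>\<^sub>M \<mu>"
  let ?T = "\<lambda>x. ((Z0 x, Z1 x), WU x)"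
  have [measurable]: "Z0 \<in> borel_measurable M" "Z1 \<in> borel_measurable M"
    using distributed_measurable[OF D0] distributed_measurable[OF D1]
    by (simp_all add: measurable_cong_sets[OF refl sets_lborel])
  have law: "distr M ?K ?T = ?K"
    by (rule joint_distr_eq_product) (use assms in auto)
  have [measurable]: "?T \<in> measurable M ?K" "(\<lambda>k. fst (fst k)) \<in> borel_measurable ?K"
    by measurable
  have "(\<integral>x. (real_cond_exp M (vimage_algebra (space M) (\<lambda>x. observation h w0 t (?T x)) borel)
        (\<lambda>x. fst (fst (?T x))) x)\<^sup>2 \<partial>M) = estimator_second_moment \<mu> h w0 t"
    unfolding estimator_second_moment_def
    using integral_real_cond_exp_sq_distr[OF M, where T="?T" and S="?K" and f="\<lambda>k. fst (fst k)"
        and v="observation h w0 t" and K=borel]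
      integrable_std_normal_pair_fst_power[OF \<mu>, of 1]
    by (simp add: law)
  then show ?thesis
    by (simp add: lemma12_fun_def cond_sigma_def observation_def split_beta')
qed

lemma estimator_second_moment_pair_indep:
  fixes N :: "'c measure" and \<mu> :: "(real \<times> real) measure"
  assumes N: "prob_space N" and \<mu>: "prob_space \<mu>" and [measurable_cong]: "sets \<mu> = sets borel"
    and [measurable]: "h \<in> borel_measurable borel"
  defines "P \<equiv> N \<Otimes>\<^sub>M ((std_normal \<Otimes>\<^sub>M std_normal) \<Otimes>\<^sub>M \<mu>)"
  shows "estimator_second_moment \<mu> h w0 t =
    (\<integral>\<omega>. (real_cond_exp P (vimage_algebra (space P) (\<lambda>\<omega>. (fst \<omega>, observation h w0 t (snd \<omega>))) (N \<Otimes>\<^sub>M borel))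
       (\<lambda>\<omega>. fst (fst (snd \<omega>))) \<omega>)\<^sup>2 \<partial>P)"
proof -
  let ?K = "(std_normal \<Otimes>\<^sub>M std_normal) \<Otimes>\<^sub>M \<mu>"
  let ?E = "real_cond_exp ?K (vimage_algebra (space ?K) (observation h w0 t) borel) (\<lambda>k. fst (fst k))"
  interpret K: prob_space ?K
    by (intro prob_space_pair prob_space_std_normal \<mu>)
  have "AE \<omega> in P. real_cond_exp P (vimage_algebra (space P) (\<lambda>\<omega>. (fst \<omega>, observation h w0 t (snd \<omega>))) (N \<Otimes>\<^sub>M borel))
      (\<lambda>\<omega>. fst (fst (snd \<omega>))) \<omega> = ?E (snd \<omega>)"
    unfolding P_def
    by (rule real_cond_exp_pair_indep_fst[OF N K.prob_space_axioms integrable_std_normal_pair_fst_power[OF \<mu>, of 1, simplified]])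
       measurable
  then have "(\<integral>\<omega>. (real_cond_exp P (vimage_algebra (space P) (\<lambda>\<omega>. (fst \<omega>, observation h w0 t (snd \<omega>))) (N \<Otimes>\<^sub>M borel))
       (\<lambda>\<omega>. fst (fst (snd \<omega>))) \<omega>)\<^sup>2 \<partial>P) = (\<integral>\<omega>. (?E (snd \<omega>))\<^sup>2 \<partial>P)"
    by (intro integral_cong_AE) (auto simp: P_def)
  also have "\<dots> = (\<integral>k. (?E k)\<^sup>2 \<partial>distr P ?K snd)"
    by (simp add: integral_distr P_def)
  also have "\<dots> = estimator_second_moment \<mu> h w0 t"
    by (simp add: P_def prob_space.distr_pair_snd[OF N K.sigma_finite_measure_axioms] estimator_second_moment_def)
  finally show ?thesis ..
qed

lemma estimator_second_moment_measure_preserving: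
  fixes N :: "'c measure" and \<mu> :: "(real \<times> real) measure"
  assumes N: "prob_space N" and \<mu>: "prob_space \<mu>" and [measurable_cong]: "sets \<mu> = sets borel"
    and [measurable]: "h \<in> borel_measurable borel"
  defines "P \<equiv> N \<Otimes>\<^sub>M ((std_normal \<Otimes>\<^sub>M std_normal) \<Otimes>\<^sub>M \<mu>)"
  assumes Tm[measurable]: "T \<in> measurable P P" and T: "distr P P T = P"
  shows "estimator_second_moment \<mu> h w0 t =
    (\<integral>\<omega>. (real_cond_exp P (vimage_algebra (space P) (\<lambda>\<omega>. observation h w0 t (snd (T \<omega>))) borel)
       (\<lambda>\<omega>. fst (fst (snd (T \<omega>)))) \<omega>)\<^sup>2 \<partial>P)"
proof -
  let ?K = "(std_normal \<Otimes>\<^sub>M std_normal) \<Otimes>\<^sub>M \<mu>"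
  interpret K: prob_space ?K
    by (intro prob_space_pair prob_space_std_normal \<mu>)
  have P: "prob_space P"
    unfolding P_def by (intro prob_space_pair N K.prob_space_axioms)
  have [measurable]: "(\<lambda>\<omega>. snd (T \<omega>)) \<in> measurable P ?K"
    using measurable_snd[of N ?K] unfolding P_def[symmetric] by measurable
  have "distr P ?K (\<lambda>\<omega>. snd (T \<omega>)) = distr (distr P P T) ?K snd"
    using distr_distr[OF _ Tm, of snd ?K] by (simp add: comp_def P_def)
  also have "\<dots> = ?K"
    unfolding T by (simp add: P_def prob_space.distr_pair_snd[OF N K.sigma_finite_measure_axioms])
  finally have law: "distr P ?K (\<lambda>\<omega>. snd (T \<omega>)) = ?K" .
  show ?thesis
    using integral_real_cond_exp_sq_distr[OF P, where T="\<lambda>\<omega>. snd (T \<omega>)" and S="?K" and f="\<lambda>k. fst (fst k)"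
        and v="observation h w0 t" and K=borel]
      integrable_std_normal_pair_fst_power[OF \<mu>, of 1]
    by (simp add: law estimator_second_moment_def)
qed

text \<open>The constants are chosen such that the rotated coordinates \<open>(p', q', r')\<close> satisfy
  \<open>b q' + c\<^sub>b r' = a q + c\<^sub>a r\<close>, where \<open>c\<^sub>t = sqrt (w0\<^sup>2 - t\<^sup>2)\<close>.\<close>

definition coupling_rotation :: "real \<Rightarrow> real \<Rightarrow> real \<Rightarrow> real \<times> (real \<times> real) \<times> 'b \<Rightarrow> real \<times> (real \<times> real) \<times> 'b"
  where "coupling_rotation w0 a b = gauss_rotation
    (sqrt (w0\<^sup>2 - b\<^sup>2) / sqrt (w0\<^sup>2 - a\<^sup>2)) (sqrt (b\<^sup>2 - a\<^sup>2) / sqrt (w0\<^sup>2 - a\<^sup>2)) (a / b) (- sqrt (b\<^sup>2 - a\<^sup>2) / b)"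

lemma measurable_coupling_rotation[measurable]:
  "coupling_rotation w0 a b \<in> measurable (std_normal \<Otimes>\<^sub>M ((std_normal \<Otimes>\<^sub>M std_normal) \<Otimes>\<^sub>M \<mu>))
     (std_normal \<Otimes>\<^sub>M ((std_normal \<Otimes>\<^sub>M std_normal) \<Otimes>\<^sub>M \<mu>))"
  unfolding coupling_rotation_def by measurable

context
  fixes w0 a b :: real
  assumes a: "0 < a" and ab: "a < b" and bw: "b \<le> w0"
begin

private lemma coupling_squares:
  "(sqrt (w0\<^sup>2 - a\<^sup>2))\<^sup>2 = w0\<^sup>2 - a\<^sup>2" "(sqrt (w0\<^sup>2 - b\<^sup>2))\<^sup>2 = w0\<^sup>2 - b\<^sup>2"
  "(sqrt (b\<^sup>2 - a\<^sup>2))\<^sup>2 = b\<^sup>2 - a\<^sup>2" "sqrt (w0\<^sup>2 - a\<^sup>2) > 0" "sqrt (b\<^sup>2 - a\<^sup>2) > 0"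
proof -
  have "a\<^sup>2 < b\<^sup>2" "b\<^sup>2 \<le> w0\<^sup>2"
    using a ab bw by (simp_all add: power_strict_mono power_mono)
  then show "(sqrt (w0\<^sup>2 - a\<^sup>2))\<^sup>2 = w0\<^sup>2 - a\<^sup>2" "(sqrt (w0\<^sup>2 - b\<^sup>2))\<^sup>2 = w0\<^sup>2 - b\<^sup>2"
    "(sqrt (b\<^sup>2 - a\<^sup>2))\<^sup>2 = b\<^sup>2 - a\<^sup>2" "sqrt (w0\<^sup>2 - a\<^sup>2) > 0" "sqrt (b\<^sup>2 - a\<^sup>2) > 0"
    by simp_all
qed

lemma distr_coupling_rotation:
  fixes \<mu> :: "'b measure"
  assumes "prob_space \<mu>"
  shows "distr (std_normal \<Otimes>\<^sub>M ((std_normal \<Otimes>\<^sub>M std_normal) \<Otimes>\<^sub>M \<mu>))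
           (std_normal \<Otimes>\<^sub>M ((std_normal \<Otimes>\<^sub>M std_normal) \<Otimes>\<^sub>M \<mu>)) (coupling_rotation w0 a b)
       = std_normal \<Otimes>\<^sub>M ((std_normal \<Otimes>\<^sub>M std_normal) \<Otimes>\<^sub>M \<mu>)"
proof -
  define ca cb s where "ca = sqrt (w0\<^sup>2 - a\<^sup>2)" and "cb = sqrt (w0\<^sup>2 - b\<^sup>2)" and "s = sqrt (b\<^sup>2 - a\<^sup>2)"
  have "cb\<^sup>2 + s\<^sup>2 = ca\<^sup>2" "a\<^sup>2 + s\<^sup>2 = b\<^sup>2" "ca > 0" "s > 0"
    using coupling_squares unfolding ca_def cb_def s_def by simp_all
  then have "(cb / ca)\<^sup>2 + (s / ca)\<^sup>2 = 1" "(a / b)\<^sup>2 + (- s / b)\<^sup>2 = 1" "s / ca \<noteq> 0" "a / b \<noteq> 0"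
    using a ab by (simp_all add: power_divide add_divide_distrib[symmetric])
  then show ?thesis
    unfolding coupling_rotation_def ca_def[symmetric] cb_def[symmetric] s_def[symmetric]
    by (intro distr_gauss_rotation assms)
qed

lemma observation_coupling_rotation:
  "observation h w0 b (snd (coupling_rotation w0 a b \<omega>)) =
    (case observation h w0 a (snd \<omega>) of (y, u, z1) \<Rightarrow>
      (y, u, sqrt (b\<^sup>2 - a\<^sup>2) / sqrt (w0\<^sup>2 - a\<^sup>2) * fst \<omega> + sqrt (w0\<^sup>2 - b\<^sup>2) / sqrt (w0\<^sup>2 - a\<^sup>2) * z1))"
proof -
  define ca cb s where "ca = sqrt (w0\<^sup>2 - a\<^sup>2)" and "cb = sqrt (w0\<^sup>2 - b\<^sup>2)" and "s = sqrt (b\<^sup>2 - a\<^sup>2)"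
  have "b * (a/b * q + (- s/b) * (cb/ca * p - s/ca * r)) + cb * (s/ca * p + cb/ca * r)
      = a * q + ((s\<^sup>2 + cb\<^sup>2) / ca) * r" for p q r
    using a ab coupling_squares(4) unfolding ca_def by (simp add: field_simps power2_eq_square)
  moreover have "(s\<^sup>2 + cb\<^sup>2) / ca = ca"
    using coupling_squares unfolding ca_def cb_def s_def by (simp add: field_simps power2_eq_square)
  ultimately show ?thesis
    unfolding observation_def coupling_rotation_def gauss_rotation_def
      ca_def[symmetric] cb_def[symmetric] s_def[symmetric]
    by (simp add: split_beta')
qed

lemma signal_coupling_rotation:
  "fst (fst (snd (coupling_rotation w0 a b \<omega>)))
     = b / a * fst (fst (snd \<omega>)) + (- sqrt (b\<^sup>2 - a\<^sup>2) / a) * fst (coupling_rotation w0 a b \<omega>)"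
proof -
  define s where "s = sqrt (b\<^sup>2 - a\<^sup>2)"
  have s2: "s * s = b * b - a * a"
    using coupling_squares(3) unfolding s_def by (simp add: power2_eq_square)
  have "a / b * q + (- s / b) * e = b / a * q + (- s / a) * (- (- s / b) * q + a / b * e)" for q e
    using a ab by (simp add: field_simps) (simp add: s2 algebra_simps)
  then show ?thesis
    unfolding coupling_rotation_def gauss_rotation_def s_def[symmetric]
    by (simp add: split_beta')
qed

lemma subalgebra_coupling_observation:
  fixes \<mu> :: "(real \<times> real) measure"
  defines "P \<equiv> std_normal \<Otimes>\<^sub>M ((std_normal \<Otimes>\<^sub>M std_normal) \<Otimes>\<^sub>M \<mu>)"
  shows "subalgebra (vimage_algebra (space P) (\<lambda>\<omega>. (fst \<omega>, observation h w0 a (snd \<omega>))) (std_normal \<Otimes>\<^sub>M borel))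
           (vimage_algebra (space P) (\<lambda>\<omega>. observation h w0 b (snd (coupling_rotation w0 a b \<omega>))) borel)"
  by (rule subalgebra_vimage_algebra_factor[where \<phi>="\<lambda>(x, y, u, z1).
        (y, u, sqrt (b\<^sup>2 - a\<^sup>2) / sqrt (w0\<^sup>2 - a\<^sup>2) * x + sqrt (w0\<^sup>2 - b\<^sup>2) / sqrt (w0\<^sup>2 - a\<^sup>2) * z1)"])
     (auto simp: observation_coupling_rotation split_beta' space_pair_measure)

lemma real_cond_exp_coupling_noise_eq_0:
  fixes \<mu> :: "(real \<times> real) measure"
  assumes \<mu>: "prob_space \<mu>" and [measurable_cong]: "sets \<mu> = sets borel"
    and [measurable]: "h \<in> borel_measurable borel"
  defines "P \<equiv> std_normal \<Otimes>\<^sub>M ((std_normal \<Otimes>\<^sub>M std_normal) \<Otimes>\<^sub>M \<mu>)"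
  shows "AE \<omega> in P. real_cond_exp P
           (vimage_algebra (space P) (\<lambda>\<omega>. observation h w0 b (snd (coupling_rotation w0 a b \<omega>))) borel)
           (\<lambda>\<omega>. fst (coupling_rotation w0 a b \<omega>)) \<omega> = 0"
proof -
  have "(\<integral>x. x \<partial>std_normal) = 0"
    using integral_std_normal_distribution_moment_odd[of 1] by simp
  then show ?thesis
    unfolding P_def
    by (intro real_cond_exp_measure_preserving_pair_fst_eq_0[OF prob_space_std_normal _
          integrable_std_normal_distribution_moment[of 1, simplified] _ _ _ distr_coupling_rotation[OF \<mu>]])
       (simp_all add: prob_space_pair prob_space_std_normal \<mu>)
qed

lemma estimator_second_moment_le_scaled:
  fixes \<mu> :: "(real \<times> real) measure"
  assumes \<mu>: "prob_space \<mu>" and [measurable_cong]: "sets \<mu> = sets borel"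
    and [measurable]: "h \<in> borel_measurable borel"
  shows "estimator_second_moment \<mu> h w0 b \<le> (b / a)\<^sup>2 * estimator_second_moment \<mu> h w0 a"
proof -
  let ?K = "(std_normal \<Otimes>\<^sub>M std_normal) \<Otimes>\<^sub>M \<mu>"
  let ?P = "std_normal \<Otimes>\<^sub>M ?K"
  let ?T = "coupling_rotation w0 a b"
  let ?X = "\<lambda>\<omega>. fst (fst (snd \<omega>))"
  let ?\<xi> = "\<lambda>\<omega>. (- sqrt (b\<^sup>2 - a\<^sup>2) / a) * fst (?T \<omega>)"
  let ?G = "vimage_algebra (space ?P) (\<lambda>\<omega>. (fst \<omega>, observation h w0 a (snd \<omega>))) (std_normal \<Otimes>\<^sub>M borel)"
  let ?F = "vimage_algebra (space ?P) (\<lambda>\<omega>. observation h w0 b (snd (?T \<omega>))) borel"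
  interpret N: prob_space std_normal by (rule prob_space_std_normal)
  interpret K: prob_space ?K by (intro prob_space_pair prob_space_std_normal \<mu>)
  interpret P: pair_prob_space std_normal ?K ..
  have law: "distr ?P ?P ?T = ?P" by (rule distr_coupling_rotation[OF \<mu>])
  have G: "sigma_finite_subalgebra ?P ?G" and F: "sigma_finite_subalgebra ?P ?F"
    by (intro sigma_finite_subalgebra_vimage_algebra P.prob_space_axioms; measurable)+
  have FG: "subalgebra ?G ?F"
    by (rule subalgebra_coupling_observation)
  have X: "integrable ?P (\<lambda>\<omega>. (?X \<omega>) ^ n)" for n
    using integrable_pair_snd[OF prob_space_std_normal K.sigma_finite_measure_axioms
        integrable_std_normal_pair_fst_power[OF \<mu>, of n]] by simp
  have fst_T: "integrable ?P (\<lambda>\<omega>. fst (?T \<omega>))"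
    using integrable_pair_fst[OF N.sigma_finite_measure_axioms K.prob_space_axioms
        integrable_std_normal_distribution_moment[of 1]]
      integrable_distr_eq[of ?T ?P ?P fst] law by simp
  note real_cond_exp_coupling_noise_eq_0[OF \<mu> assms(2,3)]
  then have \<xi>0: "AE \<omega> in ?P. real_cond_exp ?P ?F ?\<xi> \<omega> = 0"
    using sigma_finite_subalgebra.real_cond_exp_cmult[OF F fst_T, of "- sqrt (b\<^sup>2 - a\<^sup>2) / a"]
    by eventually_elim simp
  have signal: "(\<lambda>\<omega>. ?X (?T \<omega>)) = (\<lambda>\<omega>. b / a * ?X \<omega> + ?\<xi> \<omega>)"
    by (rule ext) (rule signal_coupling_rotation)
  have "estimator_second_moment \<mu> h w0 b = (\<integral>\<omega>. (real_cond_exp ?P ?F (\<lambda>\<omega>. ?X (?T \<omega>)) \<omega>)\<^sup>2 \<partial>?P)"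
    by (rule estimator_second_moment_measure_preserving[OF prob_space_std_normal \<mu> assms(2,3)
          measurable_coupling_rotation law])
  also have "\<dots> = (\<integral>\<omega>. (real_cond_exp ?P ?F (\<lambda>\<omega>. b / a * ?X \<omega> + ?\<xi> \<omega>) \<omega>)\<^sup>2 \<partial>?P)"
    unfolding signal ..
  also have "\<dots> \<le> (b / a)\<^sup>2 * (\<integral>\<omega>. (real_cond_exp ?P ?G ?X \<omega>)\<^sup>2 \<partial>?P)"
    using X[of 1] X[of 2] fst_T
    by (intro integral_real_cond_exp_sq_le_add_noise[OF G F FG _ _ _ \<xi>0]) simp_all
  also have "\<dots> = (b / a)\<^sup>2 * estimator_second_moment \<mu> h w0 a"
    using estimator_second_moment_pair_indep[OF prob_space_std_normal \<mu> assms(2,3)] by simp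
  finally show ?thesis .
qed

end

theorem lemma12:
  fixes M :: "'a measure" and Z0 Z1 :: "'a \<Rightarrow> real" and WU :: "'a \<Rightarrow> real \<times> real"
    and mu :: "(real \<times> real) measure" and h :: "real \<times> real \<Rightarrow> real" and w0 :: real
  assumes "prob_space M"
    and "distributed M lborel Z0 std_normal_density"
    and "distributed M lborel Z1 std_normal_density"
    and "prob_space.indep_var M borel Z0 borel Z1"
    and "WU \<in> borel_measurable M"
    and "prob_space mu" and "sets mu = sets borel"
    and "distr M borel WU = mu"
    and "prob_space.indep_var M borel (\<lambda>x. (Z0 x, Z1 x)) borel WU"
    and "continuous_on UNIV h"
    and "w0 > 0"
  shows "\<forall>a b. 0 < a \<longrightarrow> a \<le> b \<longrightarrow> b \<le> w0 \<longrightarrow>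
           lemma12_fun M h Z0 Z1 WU w0 b \<le> lemma12_fun M h Z0 Z1 WU w0 a"
proof (intro allI impI)
  fix a b :: real
  assume a: "0 < a" and ab: "a \<le> b" and bw: "b \<le> w0"
  have h: "h \<in> borel_measurable borel"
    using assms(10) by (rule borel_measurable_continuous_onI)
  note reduction = lemma12_fun_eq_estimator_second_moment[OF assms(1-9) h]
  show "lemma12_fun M h Z0 Z1 WU w0 b \<le> lemma12_fun M h Z0 Z1 WU w0 a"
  proof (cases "a = b")
    case False
    with ab have "a < b" by simp
    have "estimator_second_moment mu h w0 b / b\<^sup>2 \<le> (b / a)\<^sup>2 * estimator_second_moment mu h w0 a / b\<^sup>2"
      using estimator_second_moment_le_scaled[OF a \<open>a < b\<close> bw assms(6,7) h] by (simp add: divide_right_mono)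
    also have "\<dots> = estimator_second_moment mu h w0 a / a\<^sup>2"
      using a \<open>a < b\<close> by (simp add: power_divide)
    finally show ?thesis
      unfolding reduction .
  qed simp
qed

end
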